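(* Let $k$ be a field and let $P=\{0,1,2\}\times\{0,1,2\}$ with the product partial order. Let $M\colon P\to \mathbf{Vect}_k$ be the persistence module with $M_{(0,0)}=0$, $M_{(1,0)}=k$, $M_{(2,0)}=k$, $M_{(0,1)}=k$, $M_{(1,1)}=k^2$, $M_{(2,1)}=k$, $M_{(0,2)}=k$, $M_{(1,2)}=k$, $M_{(2,2)}=0$, whose structure maps between adjacent grid points are: horizontally, $M_{(1,0)}\to M_{(2,0)}$ is the identity, $M_{(0,1)}\to M_{(1,1)}$ is $x\mapsto (x,0)$, $M_{(1,1)}\to M_{(2,1)}$ is $(x,y)\mapsto x+y$, $M_{(0,2)}\to M_{(1,2)}$ is the identity, and all other horizontal maps are $0$; vertically, $M_{(0,1)}\to M_{(0,2)}$ is the identity, $M_{(1,0)}\to M_{(1,1)}$ is $y\mapsto (0,y)$, $M_{(1,1)}\to M_{(1,2)}$ is $(x,y)\mapsto x$, $M_{(2,0)}\to M_{(2,1)}$ is the identity, and all other vertical maps are $0$ (the remaining structure maps are the composites; this diagram commutes). Then $M$ has no good barcode, i.e., there is no multiset $B$ of subsets of $P$ such that for all $x\le y$ in $P$, $\operatorname{rank}(M_{x,y}\colon M_x\to M_y)$ equals the number of elements of $B$ (counted with multiplicity) containing both $x$ and $y$.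
   Context: For a poset $P$, a $P$-persistence module is a functor $M\colon P\to\mathbf{Vect}_k$; $M_{x,y}$ denotes the linear map $M_x\to M_y$ for $x\le y$ (with $M_{x,x}$ the identity). A multiset $B$ of subsets of $P$ is called a good barcode of $M$ if for all $x\le y\in P$, $\operatorname{rank}(M_{x,y})=|\{S\in B : x,y\in S\}|$ (counted with multiplicity). *)

theory Defs
  imports "Jordan_Normal_Form.DL_Rank" "HOL-Library.Multiset"
begin

definition gridP :: "(nat \<times> nat) set" where
  "gridP = {0..2} \<times> {0..2}"

definition gle :: "nat \<times> nat \<Rightarrow> nat \<times> nat \<Rightarrow> bool" where
  "gle x y \<longleftrightarrow> fst x \<le> fst y \<and> snd x \<le> snd y"

definition dimM :: "nat \<times> nat \<Rightarrow> nat" where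
  "dimM x = (if x = (1,1) then 2
             else if x \<in> {(1,0),(2,0),(0,1),(2,1),(0,2),(1,2)} then 1
             else 0)"

text \<open>Horizontal map M_(i,j) -> M_(i+1,j), as a matrix of size dimM(i+1,j) x dimM(i,j)
  (acting on column vectors).\<close>

definition hmap :: "nat \<Rightarrow> nat \<Rightarrow> 'k::field mat" where
  "hmap i j =
    (if (i,j) = (1,0) then 1\<^sub>m 1
     else if (i,j) = (0,1) then mat 2 1 (\<lambda>(r,c). if r = 0 then 1 else 0)
     else if (i,j) = (1,1) then mat 1 2 (\<lambda>(r,c). 1)
     else if (i,j) = (0,2) then 1\<^sub>m 1
     else 0\<^sub>m (dimM (i+1,j)) (dimM (i,j)))"

definition vmap :: "nat \<Rightarrow> nat \<Rightarrow> 'k::field mat" where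
  "vmap i j =
    (if (i,j) = (0,1) then 1\<^sub>m 1
     else if (i,j) = (1,0) then mat 2 1 (\<lambda>(r,c). if r = 1 then 1 else 0)
     else if (i,j) = (1,1) then mat 1 2 (\<lambda>(r,c). if c = 0 then 1 else 0)
     else if (i,j) = (2,0) then 1\<^sub>m 1
     else 0\<^sub>m (dimM (i,j+1)) (dimM (i,j)))"

fun hpath :: "nat \<Rightarrow> nat \<Rightarrow> nat \<Rightarrow> 'k::field mat" where
  "hpath i j 0 = 1\<^sub>m (dimM (i,j))"
| "hpath i j (Suc n) = hmap (i+n) j * hpath i j n"

fun vpath :: "nat \<Rightarrow> nat \<Rightarrow> nat \<Rightarrow> 'k::field mat" where
  "vpath i j 0 = 1\<^sub>m (dimM (i,j))"
| "vpath i j (Suc n) = vmap i (j+n) * vpath i j n"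

text \<open>Structure map M_{x,y} for x \<le> y: go horizontally, then vertically
  (the diagram commutes, so this is the composite along any path).\<close>

definition Mmap :: "nat \<times> nat \<Rightarrow> nat \<times> nat \<Rightarrow> 'k::field mat" where
  "Mmap x y = vpath (fst y) (snd x) (snd y - snd x) * hpath (fst x) (snd x) (fst y - fst x)"

definition map_rank :: "'k::field mat \<Rightarrow> nat" where
  "map_rank A = vec_space.rank (dim_row A) A"

definition good_barcode :: "(nat \<times> nat) set multiset \<Rightarrow> ('k::field) itself \<Rightarrow> bool" where
  "good_barcode B _ \<longleftrightarrow>
     (\<forall>S \<in># B. S \<subseteq> gridP) \<and>
     (\<forall>x \<in> gridP. \<forall>y \<in> gridP. gle x y \<longrightarrow>
        map_rank (Mmap x y :: 'k mat) = size (filter_mset (\<lambda>S. x \<in> S \<and> y \<in> S) B))"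

end

theory Submission
  imports Defs
begin

text \<open>Let \<open>a = (1,0)\<close>, \<open>c = (0,1)\<close>, \<open>e = (2,1)\<close>, \<open>g = (1,2)\<close>. Since \<open>M\<^sub>c\<close> and \<open>M\<^sub>e\<close> are
  one-dimensional, a good barcode has exactly one bar through \<open>c\<close> and exactly one through \<open>e\<close>.
  The maps \<open>c \<rightarrow> e\<close> and \<open>c \<rightarrow> g\<close> are nonzero, so the bar through \<open>c\<close> contains \<open>e\<close> and \<open>g\<close>;
  the map \<open>a \<rightarrow> e\<close> is nonzero, so the bar through \<open>e\<close> contains \<open>a\<close>. Being the same bar,
  it contains both \<open>a\<close> and \<open>g\<close>, although the map \<open>a \<rightarrow> g\<close> is zero.\<close>

lemma map_rank_one_mat: "map_rank (1\<^sub>m n :: 'k::field mat) = n"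
  unfolding map_rank_def using vec_space.low_rank_det_zero[of "1\<^sub>m n :: 'k mat" n] by simp

lemma map_rank_zero_mat: "map_rank (0\<^sub>m n m :: 'k::field mat) = 0"
  unfolding map_rank_def using vec_space.rank_0I[of n m] by simp

lemma size_filter_mset_eq_1_unique:
  assumes "size {#x \<in># M. P x#} = 1"
    and "x \<in># M" "P x" "y \<in># M" "P y"
  shows "x = y"
proof -
  obtain z where "{#x \<in># M. P x#} = {#z#}"
    using assms(1) size_1_singleton_mset by blast
  then have "x \<in># {#z#}" "y \<in># {#z#}"
    using assms(2-5) by (metis count_filter_mset count_greater_zero_iff)+
  then show ?thesis by simp
qed

lemma multiset_bars_obstruction:
  fixes B :: "'a set multiset"
  assumes one_through_c: "size {#S \<in># B. c \<in> S#} = 1"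
    and one_through_e: "size {#S \<in># B. e \<in> S#} = 1"
    and "size {#S \<in># B. a \<in> S \<and> e \<in> S#} \<noteq> 0"
    and "size {#S \<in># B. c \<in> S \<and> e \<in> S#} \<noteq> 0"
    and "size {#S \<in># B. c \<in> S \<and> g \<in> S#} \<noteq> 0"
    and none_through_a_g: "size {#S \<in># B. a \<in> S \<and> g \<in> S#} = 0"
  shows False
proof -
  obtain A where A: "A \<in># B" "a \<in> A" "e \<in> A" using assms(3) by fastforce
  obtain Ce where Ce: "Ce \<in># B" "c \<in> Ce" "e \<in> Ce" using assms(4) by fastforce
  obtain Cg where Cg: "Cg \<in># B" "c \<in> Cg" "g \<in> Cg" using assms(5) by fastforce
  have "Ce = Cg" using size_filter_mset_eq_1_unique[OF one_through_c] Ce Cg by blast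
  moreover have "A = Ce" using size_filter_mset_eq_1_unique[OF one_through_e] A Ce by blast
  ultimately have "A \<in># {#S \<in># B. a \<in> S \<and> g \<in> S#}" using A Cg by simp
  with none_through_a_g show False by auto
qed

lemma map_rank_Mmap_obstruction:
  "map_rank (Mmap (0,1) (0,1) :: 'k::field mat) = 1"
  "map_rank (Mmap (2,1) (2,1) :: 'k::field mat) = 1"
  "map_rank (Mmap (1,0) (2,1) :: 'k::field mat) = 1"
  "map_rank (Mmap (0,1) (2,1) :: 'k::field mat) = 1"
  "map_rank (Mmap (0,1) (1,2) :: 'k::field mat) = 1"
  "map_rank (Mmap (1,0) (1,2) :: 'k::field mat) = 0"
proof -
  have "(Mmap (0,1) (0,1) :: 'k mat) = 1\<^sub>m 1" "(Mmap (2,1) (2,1) :: 'k mat) = 1\<^sub>m 1"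
    "(Mmap (1,0) (2,1) :: 'k mat) = 1\<^sub>m 1"
    by (simp_all add: Mmap_def hmap_def vmap_def dimM_def numeral_2_eq_2)
  moreover have "(Mmap (0,1) (2,1) :: 'k mat) = 1\<^sub>m 1" "(Mmap (0,1) (1,2) :: 'k mat) = 1\<^sub>m 1"
    "(Mmap (1,0) (1,2) :: 'k mat) = 0\<^sub>m 1 1"
    by (rule eq_matI;
        auto simp: Mmap_def hmap_def vmap_def dimM_def numeral_2_eq_2 scalar_prod_def)+
  ultimately show
    "map_rank (Mmap (0,1) (0,1) :: 'k mat) = 1" "map_rank (Mmap (2,1) (2,1) :: 'k mat) = 1"
    "map_rank (Mmap (1,0) (2,1) :: 'k mat) = 1" "map_rank (Mmap (0,1) (2,1) :: 'k mat) = 1"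
    "map_rank (Mmap (0,1) (1,2) :: 'k mat) = 1" "map_rank (Mmap (1,0) (1,2) :: 'k mat) = 0"
    by (simp_all add: map_rank_one_mat map_rank_zero_mat)
qed

theorem mainTheorem1:
  shows "\<not> (\<exists>B. good_barcode B TYPE('k::field))"
proof
  assume "\<exists>B. good_barcode B TYPE('k::field)"
  then obtain B where "good_barcode B TYPE('k)" by blast
  then have bars: "size {#S \<in># B. x \<in> S \<and> y \<in> S#} = map_rank (Mmap x y :: 'k mat)"
    if "x \<in> gridP" "y \<in> gridP" "gle x y" for x y
    using that unfolding good_barcode_def by simp
  have grid: "(1,0) \<in> gridP" "(0,1) \<in> gridP" "(2,1) \<in> gridP" "(1,2) \<in> gridP"
    by (auto simp: gridP_def)
  show False
    by (rule multiset_bars_obstruction[where a = "(1,0)" and c = "(0,1)" and e = "(2,1)"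
          and g = "(1,2)" and B = B])
      (use bars[OF grid(2) grid(2)] bars[OF grid(3) grid(3)] bars[OF grid(1) grid(3)]
        bars[OF grid(2) grid(3)] bars[OF grid(2) grid(4)] bars[OF grid(1) grid(4)]
        map_rank_Mmap_obstruction[where 'k = 'k] in \<open>simp_all add: gle_def\<close>)
qed

end
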